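(* Any staircase shape $S$ on $n$ nodes whose number of turning points is bounded by a constant can be grown from a single node in $O(\log n)$ time steps, both in the connectivity graph model and in the adjacency graph model.
   Context: Shapes. Grid points are integer pairs $(x,y)$; two grid points are adjacent if they are at orthogonal (Manhattan) distance $1$. A shape $S=(V,E)$ is a finite connected graph whose nodes occupy distinct grid points and whose edges join only pairs of nodes occupying adjacent points; shapes are considered up to translation, and $n=|V|$. The adjacency closure $AC(S)$ is obtained from $S$ by adding an edge between every pair of adjacent nodes that are not yet joined. Growth operations. One node, the anchor $u_0$, is stationary; other nodes move relative to it. A growth operation on a node $u$ toward an adjacent grid point $p$ either (i) if $u$ has no edge to $p$, creates a new node $u'$ at $p$ with edge $uu'$; or (ii) if $p$ is occupied by a node $v$ with $uv\in E$, creates a new node $u'$ at $p$, replaces edge $uv$ by edges $uu',u'v$, and translates by one unit, along the axis of $uv$, the part of a spanning tree rooted at $u_0$ hanging from whichever of $u,v$ is farther from $u_0$, away from the other endpoint. In one time step a set of operations is applied concurrently, each node receiving at most one operation and all operations having the same cardinal direction; the displacement of each node is the sum of the unit vectors contributed by the operations on its path to $u_0$. The set is collision-free if no two nodes collide during these motions or end at the same point, and no cycle is distorted (displacements along the two paths of any cycle between two of its nodes agree). Growth processes. A growth process from $S_1^b=S_0$ applies in each time step $t$ a collision-free set of operations to $S_t^b$ obtaining $S_t^e$ (deleting no edges). In the connectivity graph model $S_{t+1}^b=S_t^e$; in the adjacency graph model $S_{t+1}^b=AC(S_t^e)$. It grows $S$ in $t_f$ steps if the shape after step $t_f$ is $S$.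 For a path, a node is a turning point if it is an endpoint or its two path-neighbors form a right angle at it. A staircase is a path whose turning points, ordered from one endpoint to the other, alternate between two clockwise- (or counterclockwise-) consecutive cardinal directions. *)

theory Defs
  imports "HOL-Analysis.Analysis"
begin

text \<open>Grid points, shapes (nodes identified with the grid points they occupy;
  edges are 2-element sets of points).\<close>

type_synonym pt = "int \<times> int"
type_synonym shape = "pt set \<times> pt set set"

definition gadj :: "pt \<Rightarrow> pt \<Rightarrow> bool" where
  "gadj p q \<longleftrightarrow> \<bar>fst p - fst q\<bar> + \<bar>snd p - snd q\<bar> = 1"

definition cardinal_dirs :: "pt set" where
  "cardinal_dirs = {(1,0), (-1,0), (0,1), (0,-1)}"

definition is_shape :: "shape \<Rightarrow> bool" where
  "is_shape S \<longleftrightarrow> (let V = fst S; E = snd S in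
     finite V \<and> V \<noteq> {} \<and>
     (\<forall>e\<in>E. \<exists>x y. e = {x,y} \<and> x \<in> V \<and> y \<in> V \<and> gadj x y) \<and>
     (\<forall>x\<in>V. \<forall>y\<in>V. (x,y) \<in> {(a,b). {a,b} \<in> E}\<^sup>*))"

definition AC :: "shape \<Rightarrow> shape" where
  "AC S = (fst S, snd S \<union> {{x,y} | x y. x \<in> fst S \<and> y \<in> fst S \<and> gadj x y})"

definition translate_eq :: "shape \<Rightarrow> shape \<Rightarrow> bool" where
  "translate_eq S T \<longleftrightarrow> (\<exists>v::pt. fst T = (\<lambda>x. x + v) ` fst S \<and>
                           snd T = (\<lambda>e. (\<lambda>x. x + v) ` e) ` snd S)"

definition traj :: "pt \<Rightarrow> pt \<Rightarrow> real \<Rightarrow> real \<times> real" where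
  "traj p w t = (of_int (fst p) + t * of_int (fst w), of_int (snd p) + t * of_int (snd w))"

text \<open>Stretch of the (oriented) edge x \<rightarrow> y caused by the growth operations:
  an operation of type (ii) on node u toward u+d lengthens edge u \<rightarrow> u+d by d.\<close>
definition stretch :: "pt set \<Rightarrow> pt \<Rightarrow> pt \<Rightarrow> pt \<Rightarrow> pt" where
  "stretch Sub d x y = (if x \<in> Sub \<and> y = x + d then d
                        else if y \<in> Sub \<and> x = y + d then -d else 0)"

text \<open>One time step: a collision-free set of growth operations (all in direction d,
  applied to the nodes in Ops, at most one per node) transforms S into S'.
  D is the displacement of the old nodes: D anchor = 0 and across every edge the
  displacement difference equals the stretch of that edge.  For tree edges this is
  exactly the sum of contributions along tree paths to the anchor; for the remaining
  edges it is exactly the requirement that no cycle is distorted.\<close>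
definition grow_step :: "shape \<Rightarrow> shape \<Rightarrow> bool" where
  "grow_step S S' \<longleftrightarrow> (\<exists>anchor d Ops D.
     let V = fst S; E = snd S;
         Sub = {u \<in> Ops. {u, u + d} \<in> E};
         Cr = Ops - Sub;
         f = (\<lambda>x. x + D x);
         nw = (\<lambda>u. u + D u + d)
     in anchor \<in> V \<and> d \<in> cardinal_dirs \<and> Ops \<subseteq> V \<and>
        D anchor = 0 \<and>
        (\<forall>x y. {x,y} \<in> E \<longrightarrow> D y - D x = stretch Sub d x y) \<and>
        \<comment> \<open>no collisions during the motion (old nodes, and nodes created by type (i)
            operations, which travel with their creator)\<close>
        (\<forall>x\<in>V. \<forall>y\<in>V. x \<noteq> y \<longrightarrow> (\<forall>t::real. 0 \<le> t \<and> t \<le> 1 \<longrightarrow> traj x (D x) t \<noteq> traj y (D y) t)) \<and>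
        (\<forall>u\<in>Cr. \<forall>y\<in>V. \<forall>t::real. 0 \<le> t \<and> t \<le> 1 \<longrightarrow> traj (u + d) (D u) t \<noteq> traj y (D y) t) \<and>
        (\<forall>u\<in>Cr. \<forall>w\<in>Cr. u \<noteq> w \<longrightarrow> (\<forall>t::real. 0 \<le> t \<and> t \<le> 1 \<longrightarrow> traj (u + d) (D u) t \<noteq> traj (w + d) (D w) t)) \<and>
        \<comment> \<open>no two nodes end at the same point\<close>
        inj_on f V \<and> inj_on nw Ops \<and> f ` V \<inter> nw ` Ops = {} \<and>
        fst S' = f ` V \<union> nw ` Ops \<and>
        snd S' = {{f x, f y} | x y. {x,y} \<in> E \<and> \<not> (x \<in> Sub \<and> y = x + d) \<and> \<not> (y \<in> Sub \<and> x = y + d)}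
                 \<union> {{f u, nw u} | u. u \<in> Ops}
                 \<union> {{nw u, f (u + d)} | u. u \<in> Sub})"

definition single_node :: shape where
  "single_node = ({(0,0)}, {})"

text \<open>Connectivity graph model: S_{t+1}^b = S_t^e.\<close>
definition grows_conn :: "shape \<Rightarrow> shape \<Rightarrow> nat \<Rightarrow> bool" where
  "grows_conn S0 S tf \<longleftrightarrow> (\<exists>seq :: nat \<Rightarrow> shape. seq 0 = S0 \<and>
      (\<forall>i<tf. grow_step (seq i) (seq (Suc i))) \<and> translate_eq (seq tf) S)"

text \<open>Adjacency graph model: S_1^b = S0, S_{t+1}^b = AC(S_t^e); seq i is S_i^e (i \<ge> 1).\<close>
definition grows_adj :: "shape \<Rightarrow> shape \<Rightarrow> nat \<Rightarrow> bool" where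
  "grows_adj S0 S tf \<longleftrightarrow> (\<exists>seq :: nat \<Rightarrow> shape. seq 0 = S0 \<and>
      (\<forall>i<tf. grow_step (if i = 0 then seq 0 else AC (seq i)) (seq (Suc i))) \<and>
      translate_eq (seq tf) S)"

definition path_listing :: "shape \<Rightarrow> pt list \<Rightarrow> bool" where
  "path_listing S ps \<longleftrightarrow> ps \<noteq> [] \<and> distinct ps \<and> fst S = set ps \<and>
     (\<forall>i. Suc i < length ps \<longrightarrow> gadj (ps ! i) (ps ! Suc i)) \<and>
     snd S = {{ps ! i, ps ! Suc i} | i. Suc i < length ps}"

definition inner_pt :: "pt \<Rightarrow> pt \<Rightarrow> int" where
  "inner_pt p q = fst p * fst q + snd p * snd q"

definition turning_points :: "pt list \<Rightarrow> nat set" where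
  "turning_points ps = {i. i < length ps \<and>
     (i = 0 \<or> i = length ps - 1 \<or>
      (0 < i \<and> Suc i < length ps \<and> inner_pt (ps ! (i - 1) - ps ! i) (ps ! Suc i - ps ! i) = 0))}"

text \<open>Staircase: the maximal straight segments between consecutive turning points
  alternate between two consecutive (i.e. perpendicular) cardinal directions a, b;
  equivalently every step of the path goes in direction a or b.\<close>
definition staircase :: "shape \<Rightarrow> pt list \<Rightarrow> bool" where
  "staircase S ps \<longleftrightarrow> path_listing S ps \<and>
     (\<exists>a\<in>cardinal_dirs. \<exists>b\<in>cardinal_dirs. inner_pt a b = 0 \<and>
        (\<forall>i. Suc i < length ps \<longrightarrow> ps ! Suc i - ps ! i \<in> {a, b}))"

end

theory Submission
  imports Defs "HOL-Library.Log_Nat"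
begin

text \<open>A staircase is described by its word of steps, each one of two perpendicular cardinal
  directions a and b. The height \<open>\<langle>x, a + b\<rangle>\<close> grows by exactly one along the path, so
  grid-adjacent vertices are consecutive on the path: these path shapes are adjacency closed,
  and on them the two growth models coincide.

  One time step doubles the last run of the word, from s to 2s or 2s + 1 equal steps d:
  every vertex of the run is operated on in direction d (type (ii)), plus the endpoint by a
  type (i) operation in the odd case. Vertex k then moves by \<open>lag k \<cdot> d\<close>, where lag k counts
  the run edges before it; as \<open>k + t \<cdot> lag k\<close> is strictly increasing in k for \<open>t \<ge> 0\<close>, the
  moving vertices keep distinct heights and nothing collides. So a run of length L is
  appended in \<open>floorlog 2 L\<close> steps, and the staircase is built run by run, with one run
  per turning point at most.\<close>

definition scale_pt :: "nat \<Rightarrow> pt \<Rightarrow> pt" where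
  "scale_pt j d = (int j * fst d, int j * snd d)"

lemma scale_pt_0 [simp]: "scale_pt 0 d = 0"
  by (simp add: scale_pt_def zero_prod_def)

lemma scale_pt_Suc: "scale_pt (Suc j) d = scale_pt j d + d"
  by (simp add: scale_pt_def algebra_simps prod_eq_iff)

lemma scale_pt_add: "scale_pt (i + j) d = scale_pt i d + scale_pt j d"
  by (simp add: scale_pt_def algebra_simps prod_eq_iff)

lemma sum_list_replicate_pt: "sum_list (replicate j d) = scale_pt j d"
  by (induction j) (auto simp: scale_pt_Suc add.commute)

lemma inner_pt_add_left: "inner_pt (x + y) z = inner_pt x z + inner_pt y z"
  by (simp add: inner_pt_def algebra_simps)

lemma inner_pt_commute: "inner_pt x y = inner_pt y x"
  by (simp add: inner_pt_def algebra_simps)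

definition path_vertex :: "pt list \<Rightarrow> nat \<Rightarrow> pt" where
  "path_vertex w k = sum_list (take k w)"

definition path_shape :: "pt list \<Rightarrow> shape" where
  "path_shape w = (path_vertex w ` {..length w},
                   (\<lambda>k. {path_vertex w k, path_vertex w (Suc k)}) ` {..<length w})"

lemma path_shape_Nil: "path_shape [] = single_node"
  by (simp add: path_shape_def single_node_def path_vertex_def zero_prod_def)

lemma path_vertex_Suc: "k < length w \<Longrightarrow> path_vertex w (Suc k) = path_vertex w k + w ! k"
  by (simp add: path_vertex_def take_Suc_conv_app_nth)

lemma path_vertex_append_replicate:
  "path_vertex (u @ replicate s d) k =
     path_vertex u (min k (length u)) + scale_pt (min (k - length u) s) d"
  by (cases "k \<le> length u") (simp_all add: path_vertex_def sum_list_replicate_pt)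

definition path_steps :: "pt list \<Rightarrow> pt list" where
  "path_steps ps = map (\<lambda>i. ps ! Suc i - ps ! i) [0..<length ps - 1]"

lemma length_path_steps [simp]: "length (path_steps ps) = length ps - 1"
  by (simp add: path_steps_def)

lemma nth_path_steps: "Suc i < length ps \<Longrightarrow> path_steps ps ! i = ps ! Suc i - ps ! i"
  by (simp add: path_steps_def less_diff_conv)

lemma set_path_steps: "set (path_steps ps) = {ps ! Suc i - ps ! i | i. Suc i < length ps}"
  by (auto simp: path_steps_def less_diff_conv)

lemma path_vertex_path_steps:
  "k < length ps \<Longrightarrow> path_vertex (path_steps ps) k = ps ! k - ps ! 0"
proof (induction k)
  case (Suc k)
  then show ?case
    by (simp add: path_vertex_Suc path_steps_def)
qed (simp add: path_vertex_def)

lemma translate_eq_path_steps: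
  assumes "path_listing S ps"
  shows "translate_eq (path_shape (path_steps ps)) S"
  unfolding translate_eq_def
proof (intro exI[of _ "ps ! 0"] conjI)
  have len: "Suc (length ps - 1) = length ps"
    using assms by (simp add: path_listing_def)
  have shift: "path_vertex (path_steps ps) k + ps ! 0 = ps ! k" if "k < length ps" for k
    using path_vertex_path_steps[OF that] by simp
  have "(\<lambda>x. x + ps ! 0) ` fst (path_shape (path_steps ps)) = (\<lambda>k. ps ! k) ` {..<length ps}"
    unfolding path_shape_def fst_conv image_image length_path_steps
    using len shift by (intro image_cong) auto
  then show "fst S = (\<lambda>x. x + ps ! 0) ` fst (path_shape (path_steps ps))"
    using assms by (simp add: path_listing_def set_conv_nth lessThan_def image_Collect)
  have "(\<lambda>e. (\<lambda>x. x + ps ! 0) ` e) ` snd (path_shape (path_steps ps)) =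
      (\<lambda>k. {ps ! k, ps ! Suc k}) ` {..<length ps - 1}"
    unfolding path_shape_def snd_conv image_image length_path_steps
    by (intro image_cong) (auto simp: shift)
  then show "snd S = (\<lambda>e. (\<lambda>x. x + ps ! 0) ` e) ` snd (path_shape (path_steps ps))"
    using assms by (auto simp: path_listing_def)
qed

definition count_runs :: "'a list \<Rightarrow> nat" where
  "count_runs w = card {i. i < length w \<and> (i = 0 \<or> w ! (i - 1) \<noteq> w ! i)}"

lemma count_runs_append_replicate:
  assumes "u = [] \<or> last u \<noteq> e" "0 < L"
  shows "Suc (count_runs u) \<le> count_runs (u @ replicate L e)"
proof -
  let ?w = "u @ replicate L e"
  let ?A = "{i. i < length u \<and> (i = 0 \<or> u ! (i - 1) \<noteq> u ! i)}"
  let ?B = "{i. i < length ?w \<and> (i = 0 \<or> ?w ! (i - 1) \<noteq> ?w ! i)}"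
  have "length u \<in> ?B"
  proof (cases "u = []")
    case False
    then have "?w ! (length u - 1) = last u" "?w ! length u = e"
      using assms(2) by (simp_all add: nth_append last_conv_nth)
    then show ?thesis
      using assms False by simp
  qed (use assms in simp)
  moreover have "?A \<subseteq> ?B"
    by (auto simp: nth_append)
  ultimately have "insert (length u) ?A \<subseteq> ?B"
    by blast
  then have "card (insert (length u) ?A) \<le> card ?B"
    by (intro card_mono) simp_all
  then show ?thesis
    unfolding count_runs_def by simp
qed

lemma split_last_run:
  "w \<noteq> [] \<Longrightarrow> \<exists>u L. w = u @ replicate L (last w) \<and> 0 < L \<and> (u = [] \<or> last u \<noteq> last w)"
proof (induction w rule: rev_induct)
  case (snoc x v)
  show ?case
  proof (cases "v = [] \<or> last v \<noteq> x")
    case True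
    then show ?thesis
      by (intro exI[of _ v] exI[of _ 1]) auto
  next
    case False
    then obtain u L where "v = u @ replicate L x" "u = [] \<or> last u \<noteq> x"
      using snoc.IH by auto
    then show ?thesis
      by (intro exI[of _ u] exI[of _ "Suc L"]) (simp add: replicate_append_same[symmetric])
  qed
qed simp

lemma grow_stepI:
  fixes S S' :: shape
  assumes "anchor \<in> fst S" "d \<in> cardinal_dirs" "Ops \<subseteq> fst S" "D anchor = 0"
    and "{u \<in> Ops. {u, u + d} \<in> snd S} = Sub"
    and "\<And>x y. {x, y} \<in> snd S \<Longrightarrow> D y - D x = stretch Sub d x y"
    and "\<And>x y t. \<lbrakk>x \<in> fst S; y \<in> fst S; x \<noteq> y; 0 \<le> t; t \<le> 1\<rbrakk> \<Longrightarrow>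
           traj x (D x) t \<noteq> traj y (D y) t"
    and "\<And>u y t. \<lbrakk>u \<in> Ops - Sub; y \<in> fst S; 0 \<le> t; t \<le> 1\<rbrakk> \<Longrightarrow>
           traj (u + d) (D u) t \<noteq> traj y (D y) t"
    and "\<And>u w t. \<lbrakk>u \<in> Ops - Sub; w \<in> Ops - Sub; u \<noteq> w; 0 \<le> t; t \<le> 1\<rbrakk> \<Longrightarrow>
           traj (u + d) (D u) t \<noteq> traj (w + d) (D w) t"
    and "inj_on (\<lambda>x. x + D x) (fst S)" "inj_on (\<lambda>u. u + D u + d) Ops"
    and "(\<lambda>x. x + D x) ` fst S \<inter> (\<lambda>u. u + D u + d) ` Ops = {}"
    and "fst S' = (\<lambda>x. x + D x) ` fst S \<union> (\<lambda>u. u + D u + d) ` Ops"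
    and "snd S' = {{x + D x, y + D y} | x y. {x, y} \<in> snd S \<and>
                     \<not> (x \<in> Sub \<and> y = x + d) \<and> \<not> (y \<in> Sub \<and> x = y + d)}
                  \<union> {{u + D u, u + D u + d} | u. u \<in> Ops}
                  \<union> {{u + D u + d, u + d + D (u + d)} | u. u \<in> Sub}"
  shows "grow_step S S'"
  unfolding grow_step_def Let_def
  apply (rule exI[of _ anchor], rule exI[of _ d], rule exI[of _ Ops], rule exI[of _ D])
  apply (simp only: assms(5))
  apply (intro conjI ballI allI impI)
  by (simp_all add: assms)

lemma stretch_swap:
  fixes d :: pt
  assumes "d \<noteq> 0"
  shows "stretch Sub d y x = - stretch Sub d x y"
proof -
  have "\<not> (x = y + d \<and> y = x + d)"
    using assms by (auto simp: prod_eq_iff)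
  then show ?thesis
    by (simp add: stretch_def)
qed

definition grows_ac_closed :: "shape \<Rightarrow> shape \<Rightarrow> nat \<Rightarrow> bool" where
  "grows_ac_closed S0 S t \<longleftrightarrow> (\<exists>seq. seq 0 = S0 \<and> seq t = S \<and>
     (\<forall>i<t. AC (seq i) = seq i \<and> grow_step (seq i) (seq (Suc i))))"

lemma grows_ac_closed_0: "grows_ac_closed S S 0"
  unfolding grows_ac_closed_def by (rule exI[of _ "\<lambda>_. S"]) simp

lemma grows_ac_closed_Suc:
  assumes "grows_ac_closed S0 S t" "AC S = S" "grow_step S S'"
  shows "grows_ac_closed S0 S' (Suc t)"
proof -
  obtain seq where seq: "seq 0 = S0" "seq t = S" "\<forall>i<t. AC (seq i) = seq i \<and> grow_step (seq i) (seq (Suc i))"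
    using assms(1) unfolding grows_ac_closed_def by blast
  have "\<forall>i<Suc t. AC ((seq(Suc t := S')) i) = (seq(Suc t := S')) i \<and>
      grow_step ((seq(Suc t := S')) i) ((seq(Suc t := S')) (Suc i))"
    using seq assms(2,3) by (auto simp: less_Suc_eq)
  then show ?thesis
    unfolding grows_ac_closed_def using seq(1) by (intro exI[of _ "seq(Suc t := S')"]) simp
qed

lemma grows_ac_closed_imp_grows:
  assumes "grows_ac_closed S0 S t" "translate_eq S T"
  shows "grows_conn S0 T t \<and> grows_adj S0 T t"
proof -
  obtain seq where seq: "seq 0 = S0" "seq t = S" "\<forall>i<t. AC (seq i) = seq i \<and> grow_step (seq i) (seq (Suc i))"
    using assms(1) unfolding grows_ac_closed_def by blast
  then show ?thesis
    unfolding grows_conn_def grows_adj_def using assms(2) by (intro conjI exI[of _ seq]) auto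
qed

text \<open>When the s edges following vertex q are doubled, vertex k moves by \<open>lag q s k\<close> units.\<close>

definition lag :: "nat \<Rightarrow> nat \<Rightarrow> nat \<Rightarrow> nat" where
  "lag q s k = min (k - q) s"

lemma lag_mono: "j \<le> k \<Longrightarrow> lag q s j \<le> lag q s k"
  by (simp add: lag_def)

lemma add_lag_strict_mono: "j < k \<Longrightarrow> j + lag q s j < k + lag q s k"
  using lag_mono[of j k q s] by simp

lemma add_lag_eq_iff: "j + lag q s j = k + lag q s k \<longleftrightarrow> j = k"
  using add_lag_strict_mono[of j k q s] add_lag_strict_mono[of k j q s]
  by (cases j k rule: linorder_cases) auto

lemma add_lag_neq_Suc_add_lag:
  assumes "j \<le> q + s" "q \<le> i" "i \<le> q + s"
  shows "j + lag q s j \<noteq> Suc (i + lag q s i)"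
proof (cases "j \<le> q")
  case True
  then show ?thesis
    using assms by (simp add: lag_def)
next
  case False
  then have "j + lag q s j = 2 * j - q" "Suc (i + lag q s i) = Suc (2 * i - q)"
    using assms by (auto simp: lag_def)
  moreover have "2 * j \<noteq> Suc (2 * i)"
    by presburger
  ultimately show ?thesis
    using False assms by linarith
qed

lemma doubled_vertex_indices:
  assumes "r \<le> 1"
  shows "{..q + 2 * s + r} = (\<lambda>k. k + lag q s k) ` {..q + s} \<union>
    (\<lambda>i. Suc (i + lag q s i)) ` ({q..<q + s} \<union> (if r = 1 then {q + s} else {}))"
proof (intro equalityI subsetI)
  fix m assume m: "m \<in> {..q + 2 * s + r}"
  define j where "j = (m - q) div 2"
  have "m - q = 2 * j \<or> m - q = Suc (2 * j)"
    unfolding j_def by presburger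
  then consider "m \<le> q" | "m = q + 2 * j" "j \<le> s" | "m = Suc (q + 2 * j)" "j < s \<or> j = s \<and> r = 1"
    using m assms by (cases "m \<le> q") (simp_all, arith+)
  then show "m \<in> (\<lambda>k. k + lag q s k) ` {..q + s} \<union>
    (\<lambda>i. Suc (i + lag q s i)) ` ({q..<q + s} \<union> (if r = 1 then {q + s} else {}))"
  proof cases
    case 1
    then show ?thesis by (intro UnI1 rev_image_eqI[of m]) (auto simp: lag_def)
  next
    case 2
    then show ?thesis by (intro UnI1 rev_image_eqI[of "q + j"]) (auto simp: lag_def)
  next
    case 3
    then have "q + j \<in> {q..<q + s} \<union> (if r = 1 then {q + s} else {})"
      by auto
    moreover have "m = Suc (q + j + lag q s (q + j))"
      using 3 by (auto simp: lag_def)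
    ultimately show ?thesis by blast
  qed
qed (use assms in \<open>auto simp: lag_def split: if_splits\<close>)

lemma doubled_edge_indices:
  assumes "r \<le> 1"
  shows "{..<q + 2 * s + r} = {..<q} \<union>
    (\<lambda>i. i + lag q s i) ` ({q..<q + s} \<union> (if r = 1 then {q + s} else {})) \<union>
    (\<lambda>i. Suc (i + lag q s i)) ` {q..<q + s}"
proof (intro equalityI subsetI)
  fix m assume m: "m \<in> {..<q + 2 * s + r}"
  define j where "j = (m - q) div 2"
  have "m - q = 2 * j \<or> m - q = Suc (2 * j)"
    unfolding j_def by presburger
  then consider "m < q" | "m = q + 2 * j" "j < s \<or> j = s \<and> r = 1" | "m = Suc (q + 2 * j)" "j < s"
    using m assms by (cases "m < q") (simp_all, arith+)
  then show "m \<in> {..<q} \<union>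
    (\<lambda>i. i + lag q s i) ` ({q..<q + s} \<union> (if r = 1 then {q + s} else {})) \<union>
    (\<lambda>i. Suc (i + lag q s i)) ` {q..<q + s}"
  proof cases
    case 1
    then show ?thesis by blast
  next
    case 2
    then have "q + j \<in> {q..<q + s} \<union> (if r = 1 then {q + s} else {})"
      by auto
    moreover have "m = q + j + lag q s (q + j)"
      using 2 by (auto simp: lag_def)
    ultimately show ?thesis by blast
  next
    case 3
    then show ?thesis by (intro UnI2 rev_image_eqI[of "q + j"]) (auto simp: lag_def)
  qed
qed (use assms in \<open>auto simp: lag_def split: if_splits\<close>)

locale staircase_dirs =
  fixes a b :: pt
  assumes dir_a: "a \<in> cardinal_dirs" and dir_b: "b \<in> cardinal_dirs"
    and perp: "inner_pt a b = 0"
begin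

definition height :: "pt \<Rightarrow> int" where
  "height x = inner_pt x (a + b)"

lemma height_add: "height (x + y) = height x + height y"
  by (simp add: height_def inner_pt_add_left)

lemma height_scale_pt: "height (scale_pt j x) = int j * height x"
  by (simp add: height_def scale_pt_def inner_pt_def algebra_simps)

lemma height_0 [simp]: "height 0 = 0"
  by (simp add: height_def inner_pt_def)

lemma height_dir: "x \<in> {a, b} \<Longrightarrow> height x = 1"
proof -
  have "inner_pt a a = 1" "inner_pt b b = 1"
    using dir_a dir_b by (auto simp: cardinal_dirs_def inner_pt_def)
  then show "x \<in> {a, b} \<Longrightarrow> height x = 1"
    using perp inner_pt_commute[of a b] by (auto simp: height_def inner_pt_def algebra_simps)
qed

lemma height_sum_list: "set xs \<subseteq> {a, b} \<Longrightarrow> height (sum_list xs) = int (length xs)"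
  by (induction xs) (auto simp: height_add height_dir)

lemma height_path_vertex:
  "set w \<subseteq> {a, b} \<Longrightarrow> k \<le> length w \<Longrightarrow> height (path_vertex w k) = int k"
  unfolding path_vertex_def by (subst height_sum_list) (auto dest: in_set_takeD)

lemma path_vertex_eq_iff:
  assumes "set w \<subseteq> {a, b}" "j \<le> length w" "k \<le> length w"
  shows "path_vertex w j = path_vertex w k \<longleftrightarrow> j = k"
  by (metis height_path_vertex[OF assms(1,2)] height_path_vertex[OF assms(1,3)] of_nat_eq_iff)

lemma height_diff_if_gadj:
  assumes "gadj x y"
  shows "\<bar>height x - height y\<bar> = 1"
proof -
  have "fst (a + b) \<in> {1, -1}" "snd (a + b) \<in> {1, -1}"
    using dir_a dir_b perp by (auto simp: cardinal_dirs_def inner_pt_def)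
  moreover have "height x - height y = (fst x - fst y) * fst (a + b) + (snd x - snd y) * snd (a + b)"
    by (simp add: height_def inner_pt_def algebra_simps)
  moreover have "\<bar>fst x - fst y\<bar> + \<bar>snd x - snd y\<bar> = 1"
    using assms unfolding gadj_def .
  ultimately show ?thesis
    by (elim insertE emptyE) (simp_all, arith+)
qed

lemma traj_neq_if_height_neq:
  fixes t :: real
  assumes "real_of_int (height p) + t * of_int (height w) \<noteq>
           real_of_int (height p') + t * of_int (height w')"
  shows "traj p w t \<noteq> traj p' w' t"
proof
  have level: "real_of_int (height p) + t * of_int (height w) =
      fst (traj p w t) * fst (a + b) + snd (traj p w t) * snd (a + b)" for p w
    by (simp add: traj_def height_def inner_pt_def algebra_simps)
  assume "traj p w t = traj p' w' t"
  then show False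
    using assms level[of p w] level[of p' w'] by simp
qed

lemma AC_path_shape:
  assumes w: "set w \<subseteq> {a, b}"
  shows "AC (path_shape w) = path_shape w"
proof -
  have edge: "{x, y} \<in> snd (path_shape w)"
    if x: "x \<in> fst (path_shape w)" and y: "y \<in> fst (path_shape w)" and adj: "gadj x y" for x y
  proof -
    obtain j k where jk: "x = path_vertex w j" "y = path_vertex w k" "j \<le> length w" "k \<le> length w"
      using x y by (auto simp: path_shape_def)
    have "\<bar>int j - int k\<bar> = 1"
      using height_diff_if_gadj[OF adj] height_path_vertex[OF w] jk by simp
    then have "k = Suc j \<or> j = Suc k" by arith
    then show ?thesis
      using jk by (auto simp: path_shape_def insert_commute)
  qed
  then have "{{x, y} | x y. x \<in> fst (path_shape w) \<and> y \<in> fst (path_shape w) \<and> gadj x y}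
      \<subseteq> snd (path_shape w)"
    by blast
  then show ?thesis
    by (simp add: AC_def Un_absorb2)
qed

end

text \<open>The
  displacement has to be a function of points; on the old path the height of a vertex is
  its index, which is how \<open>disp\<close> finds the lag.\<close>

locale block_doubling = staircase_dirs +
  fixes u :: "pt list" and d :: pt and s r :: nat
  assumes u_dirs: "set u \<subseteq> {a, b}" and d_dir: "d \<in> {a, b}" and r_le_1: "r \<le> 1"
begin

abbreviation old :: "nat \<Rightarrow> pt" where
  "old \<equiv> path_vertex (u @ replicate s d)"

abbreviation new :: "nat \<Rightarrow> pt" where
  "new \<equiv> path_vertex (u @ replicate (2 * s + r) d)"

abbreviation offset :: "nat \<Rightarrow> nat" where
  "offset \<equiv> lag (length u) s"

definition disp :: "pt \<Rightarrow> pt" where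
  "disp x = scale_pt (offset (nat (height x))) d"

definition op_indices :: "nat set" where
  "op_indices = {length u..<length u + s} \<union> (if r = 1 then {length u + s} else {})"

lemma op_indices_bounds: "i \<in> op_indices \<Longrightarrow> length u \<le> i \<and> i \<le> length u + s"
  by (auto simp: op_indices_def split: if_splits)

lemma height_old: "k \<le> length u + s \<Longrightarrow> height (old k) = int k"
  using u_dirs d_dir by (intro height_path_vertex) auto

lemma old_eq_iff: "j \<le> length u + s \<Longrightarrow> k \<le> length u + s \<Longrightarrow> old j = old k \<longleftrightarrow> j = k"
  using u_dirs d_dir by (intro path_vertex_eq_iff) auto

lemma height_d: "height d = 1"
  using d_dir by (rule height_dir)

lemma disp_old: "k \<le> length u + s \<Longrightarrow> disp (old k) = scale_pt (offset k) d"
  by (simp add: disp_def height_old)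

lemma old_Suc: "length u \<le> k \<Longrightarrow> k < length u + s \<Longrightarrow> old (Suc k) = old k + d"
  by (simp add: path_vertex_append_replicate Suc_diff_le scale_pt_Suc add.assoc)

lemma old_block_vertex:
  "j \<le> s \<Longrightarrow> old (length u + j) = path_vertex u (length u) + scale_pt j d"
  by (simp add: path_vertex_append_replicate)

lemma new_block_vertex:
  "j \<le> 2 * s + r \<Longrightarrow> new (length u + j) = path_vertex u (length u) + scale_pt j d"
  by (simp add: path_vertex_append_replicate)

lemma old_moves:
  assumes k: "k \<le> length u + s"
  shows "old k + disp (old k) = new (k + offset k)"
proof (cases "k \<le> length u")
  case True
  then show ?thesis
    using disp_old[OF k] by (simp add: lag_def path_vertex_append_replicate)
next
  case False
  then obtain j where j: "k = length u + j" "j \<le> s"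
    using k by (metis le_add_diff_inverse nat_le_linear add_le_cancel_left)
  have "disp (old k) = scale_pt j d"
    using disp_old[OF k] j by (simp add: lag_def)
  moreover have "old k = path_vertex u (length u) + scale_pt j d"
    using j by (simp add: old_block_vertex)
  ultimately have "old k + disp (old k) = path_vertex u (length u) + scale_pt (j + j) d"
    by (simp add: scale_pt_add add.assoc)
  also have "\<dots> = new (k + offset k)"
    using j by (simp add: lag_def new_block_vertex[of "j + j", folded add.assoc])
  finally show ?thesis .
qed

lemma old_spawns:
  assumes i: "i \<in> op_indices"
  shows "old i + disp (old i) + d = new (Suc (i + offset i))"
proof -
  define j where "j = i - length u"
  have j: "i = length u + j" "j < s \<or> j = s \<and> r = 1"
    using i unfolding j_def op_indices_def by (auto split: if_splits)
  have "disp (old i) = scale_pt j d"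
    using disp_old[of i] op_indices_bounds[OF i] j by (auto simp: lag_def)
  moreover have "old i = path_vertex u (length u) + scale_pt j d"
    using j by (auto simp: old_block_vertex)
  ultimately have "old i + disp (old i) + d = path_vertex u (length u) + scale_pt (Suc (j + j)) d"
    by (simp add: scale_pt_add scale_pt_Suc add.assoc)
  also have "\<dots> = new (length u + Suc (j + j))"
    using j r_le_1 by (intro new_block_vertex[symmetric]) auto
  also have "length u + Suc (j + j) = Suc (i + offset i)"
    using j by (auto simp: lag_def)
  finally show ?thesis .
qed

abbreviation old_shape :: shape where
  "old_shape \<equiv> path_shape (u @ replicate s d)"

abbreviation new_shape :: shape where
  "new_shape \<equiv> path_shape (u @ replicate (2 * s + r) d)"

abbreviation stretched :: "pt set" where
  "stretched \<equiv> old ` {length u..<length u + s}"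

lemma fst_old_shape: "fst old_shape = old ` {..length u + s}"
  by (simp add: path_shape_def)

lemma snd_old_shape: "snd old_shape = (\<lambda>k. {old k, old (Suc k)}) ` {..<length u + s}"
  by (simp add: path_shape_def)

lemma old_in_stretched_iff: "k \<le> length u + s \<Longrightarrow> old k \<in> stretched \<longleftrightarrow> length u \<le> k \<and> k < length u + s"
  using old_eq_iff by force

lemma old_neq_old_Suc_plus:
  assumes "k < length u + s"
  shows "old k \<noteq> old (Suc k) + d"
proof
  assume "old k = old (Suc k) + d"
  then have "height (old k) = height (old (Suc k)) + height d"
    by (simp add: height_add)
  then show False
    using assms by (simp add: height_old height_d)
qed

lemma stretched_ops: "{x \<in> old ` op_indices. {x, x + d} \<in> snd old_shape} = stretched"
proof (intro equalityI subsetI)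
  fix x assume "x \<in> {x \<in> old ` op_indices. {x, x + d} \<in> snd old_shape}"
  then obtain i k where i: "i \<in> op_indices" "x = old i"
    and k: "k < length u + s" "x + d \<in> {old k, old (Suc k)}"
    unfolding snd_old_shape by blast
  have "int i + 1 = height (x + d)"
    using i op_indices_bounds[OF i(1)] by (simp add: height_add height_old height_d)
  also have "\<dots> \<le> int (length u + s)"
    using k by (auto simp: height_old)
  finally show "x \<in> stretched"
    using i op_indices_bounds[OF i(1)] by auto
next
  fix x assume "x \<in> stretched"
  then obtain i where i: "length u \<le> i" "i < length u + s" "x = old i"
    by auto
  then have "{x, x + d} \<in> snd old_shape"
    unfolding snd_old_shape using old_Suc[OF i(1,2)] by auto
  moreover have "x \<in> old ` op_indices"
    using i by (auto simp: op_indices_def)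
  ultimately show "x \<in> {x \<in> old ` op_indices. {x, x + d} \<in> snd old_shape}"
    by blast
qed

lemma spawning_ops: "old ` op_indices - stretched = (if r = 1 then {old (length u + s)} else {})"
proof -
  have "old ` op_indices = stretched \<union> (if r = 1 then {old (length u + s)} else {})"
    by (auto simp: op_indices_def)
  moreover have "old (length u + s) \<notin> stretched"
    using old_in_stretched_iff[of "length u + s"] by simp
  ultimately show ?thesis
    by (cases "r = 1") (simp_all add: insert_Diff_if)
qed

lemma disp_stretch_edge:
  assumes k: "k < length u + s"
  shows "disp (old (Suc k)) - disp (old k) = stretch stretched d (old k) (old (Suc k))"
proof (cases "length u \<le> k")
  case True
  have "disp (old (Suc k)) = disp (old k) + d"
    using True k by (simp add: disp_old lag_def Suc_diff_le scale_pt_Suc)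
  then show ?thesis
    using True k old_Suc[OF True k] old_in_stretched_iff[of k] by (simp add: stretch_def)
next
  case False
  then show ?thesis
    using k old_in_stretched_iff[of k] old_in_stretched_iff[of "Suc k"] old_neq_old_Suc_plus[OF k]
    by (simp add: disp_old lag_def stretch_def)
qed

lemma disp_stretch:
  assumes "{x, y} \<in> snd old_shape"
  shows "disp y - disp x = stretch stretched d x y"
proof -
  obtain k where k: "k < length u + s" "{x, y} = {old k, old (Suc k)}"
    using assms unfolding snd_old_shape by blast
  have "d \<noteq> 0"
    using height_d by auto
  from k(2) consider "x = old k" "y = old (Suc k)" | "x = old (Suc k)" "y = old k"
    by (auto simp: doubleton_eq_iff)
  then show ?thesis
  proof cases
    case 1
    then show ?thesis
      using disp_stretch_edge[OF k(1)] by simp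
  next
    case 2
    then show ?thesis
      using stretch_swap[OF \<open>d \<noteq> 0\<close>, of stretched "old (Suc k)" "old k"]
      by (simp add: disp_stretch_edge[OF k(1), symmetric])
  qed
qed

lemma height_disp_old: "k \<le> length u + s \<Longrightarrow> height (disp (old k)) = int (offset k)"
  by (simp add: disp_old height_scale_pt height_d)

lemma level_strict_mono:
  fixes t :: real
  assumes "j < k" "0 \<le> t"
  shows "real j + t * offset j < real k + t * offset k"
proof -
  have "t * offset j \<le> t * offset k"
    using assms by (intro mult_left_mono) (simp_all add: lag_mono)
  then show ?thesis
    using assms(1) by linarith
qed

lemma old_trajectories_disjoint:
  fixes t :: real
  assumes "j \<le> length u + s" "k \<le> length u + s" "j \<noteq> k" "0 \<le> t"
  shows "traj (old j) (disp (old j)) t \<noteq> traj (old k) (disp (old k)) t"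
proof (rule traj_neq_if_height_neq)
  have "real j + t * offset j \<noteq> real k + t * offset k"
    using level_strict_mono[of j k t] level_strict_mono[of k j t] assms(3,4)
    by (cases j k rule: linorder_cases) auto
  then show "real_of_int (height (old j)) + t * of_int (height (disp (old j))) \<noteq>
             real_of_int (height (old k)) + t * of_int (height (disp (old k)))"
    using assms(1,2) by (simp add: height_old height_disp_old)
qed

lemma spawn_trajectory_disjoint:
  fixes t :: real
  assumes "k \<le> length u + s" "0 \<le> t"
  shows "traj (old (length u + s) + d) (disp (old (length u + s))) t \<noteq> traj (old k) (disp (old k)) t"
proof (rule traj_neq_if_height_neq)
  have "t * offset k \<le> t * offset (length u + s)"
    using assms by (intro mult_left_mono) (simp_all add: lag_mono)
  then have "real k + t * offset k \<noteq> real (length u + s) + 1 + t * offset (length u + s)"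
    using assms(1) by linarith
  then show "real_of_int (height (old (length u + s) + d)) +
               t * of_int (height (disp (old (length u + s)))) \<noteq>
             real_of_int (height (old k)) + t * of_int (height (disp (old k)))"
    using assms(1) by (simp add: height_add height_d height_old height_disp_old)
qed

lemma height_moved: "k \<le> length u + s \<Longrightarrow> height (old k + disp (old k)) = int (k + offset k)"
  by (simp add: height_add height_old height_disp_old)

lemma height_spawned:
  "k \<le> length u + s \<Longrightarrow> height (old k + disp (old k) + d) = int (Suc (k + offset k))"
  by (simp add: height_add height_old height_disp_old height_d)

lemma inj_on_moves: "inj_on (\<lambda>x. x + disp x) (fst old_shape)"
proof (rule inj_onI)
  fix x y assume "x \<in> fst old_shape" "y \<in> fst old_shape" and eq: "x + disp x = y + disp y"
  then obtain j k where jk: "j \<le> length u + s" "k \<le> length u + s" "x = old j" "y = old k"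
    unfolding fst_old_shape by blast
  have "j + offset j = k + offset k"
    using eq jk by (metis height_moved of_nat_eq_iff)
  then show "x = y"
    using jk by (simp only: add_lag_eq_iff)
qed

lemma inj_on_spawns: "inj_on (\<lambda>v. v + disp v + d) (old ` op_indices)"
proof (rule inj_onI)
  fix x y assume "x \<in> old ` op_indices" "y \<in> old ` op_indices" and eq: "x + disp x + d = y + disp y + d"
  then obtain j k where jk: "j \<in> op_indices" "k \<in> op_indices" "x = old j" "y = old k"
    by blast
  have "Suc (j + offset j) = Suc (k + offset k)"
    using eq jk op_indices_bounds by (metis height_spawned of_nat_eq_iff)
  then show "x = y"
    using jk by (simp only: nat.inject add_lag_eq_iff)
qed

lemma moves_spawns_disjoint:
  "(\<lambda>x. x + disp x) ` fst old_shape \<inter> (\<lambda>v. v + disp v + d) ` old ` op_indices = {}"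
proof (rule ccontr)
  assume "(\<lambda>x. x + disp x) ` fst old_shape \<inter> (\<lambda>v. v + disp v + d) ` old ` op_indices \<noteq> {}"
  then obtain j i where ji: "j \<le> length u + s" "i \<in> op_indices"
    "old j + disp (old j) = old i + disp (old i) + d"
    unfolding fst_old_shape by blast
  then have "int (j + offset j) = int (Suc (i + offset i))"
    using op_indices_bounds by (metis height_moved height_spawned)
  then show False
    using add_lag_neq_Suc_add_lag[of j "length u" s i] ji op_indices_bounds[OF ji(2)] by simp
qed

lemma fst_new_shape: "fst new_shape = new ` {..length u + 2 * s + r}"
  by (simp add: path_shape_def add.assoc)

lemma snd_new_shape: "snd new_shape = (\<lambda>m. {new m, new (Suc m)}) ` {..<length u + 2 * s + r}"
  by (simp add: path_shape_def add.assoc)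

lemma new_vertices:
  "fst new_shape = (\<lambda>x. x + disp x) ` fst old_shape \<union> (\<lambda>v. v + disp v + d) ` old ` op_indices"
proof -
  have "(\<lambda>x. x + disp x) ` fst old_shape = new ` (\<lambda>k. k + offset k) ` {..length u + s}"
    unfolding fst_old_shape image_image by (intro image_cong) (simp_all add: old_moves)
  moreover have "(\<lambda>v. v + disp v + d) ` old ` op_indices = new ` (\<lambda>i. Suc (i + offset i)) ` op_indices"
    unfolding image_image by (intro image_cong) (simp_all add: old_spawns)
  ultimately show ?thesis
    unfolding fst_new_shape doubled_vertex_indices[OF r_le_1] op_indices_def image_Un by simp
qed

lemma moved_below: "k \<le> length u \<Longrightarrow> old k + disp (old k) = new k"
  using old_moves[of k] by (simp add: lag_def)

lemma edge_kept_iff: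
  assumes k: "k < length u + s" and xy: "{x, y} = {old k, old (Suc k)}"
  shows "\<not> (x \<in> stretched \<and> y = x + d) \<and> \<not> (y \<in> stretched \<and> x = y + d) \<longleftrightarrow> k < length u"
proof
  assume kept: "\<not> (x \<in> stretched \<and> y = x + d) \<and> \<not> (y \<in> stretched \<and> x = y + d)"
  show "k < length u"
  proof (rule ccontr)
    assume "\<not> k < length u"
    then have "old k \<in> stretched" "old (Suc k) = old k + d"
      using k old_Suc by auto
    then show False
      using xy kept by (auto simp: doubleton_eq_iff)
  qed
next
  assume "k < length u"
  then show "\<not> (x \<in> stretched \<and> y = x + d) \<and> \<not> (y \<in> stretched \<and> x = y + d)"
    using xy old_in_stretched_iff[of k] old_neq_old_Suc_plus[OF k] by (auto simp: doubleton_eq_iff)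
qed

lemma surviving_edges:
  "{{x + disp x, y + disp y} | x y. {x, y} \<in> snd old_shape \<and>
      \<not> (x \<in> stretched \<and> y = x + d) \<and> \<not> (y \<in> stretched \<and> x = y + d)}
   = (\<lambda>m. {new m, new (Suc m)}) ` {..<length u}"
proof (intro equalityI subsetI)
  fix e assume "e \<in> {{x + disp x, y + disp y} | x y. {x, y} \<in> snd old_shape \<and>
      \<not> (x \<in> stretched \<and> y = x + d) \<and> \<not> (y \<in> stretched \<and> x = y + d)}"
  then obtain x y k where e: "e = {x + disp x, y + disp y}"
    and k: "k < length u + s" "{x, y} = {old k, old (Suc k)}"
    and kept: "\<not> (x \<in> stretched \<and> y = x + d)" "\<not> (y \<in> stretched \<and> x = y + d)"
    unfolding snd_old_shape by blast
  then have "k < length u"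
    using edge_kept_iff by blast
  moreover have "e = {new k, new (Suc k)}"
    using e k(2) \<open>k < length u\<close> by (auto simp: doubleton_eq_iff moved_below)
  ultimately show "e \<in> (\<lambda>m. {new m, new (Suc m)}) ` {..<length u}"
    by blast
next
  fix e assume "e \<in> (\<lambda>m. {new m, new (Suc m)}) ` {..<length u}"
  then obtain m where m: "m < length u" "e = {new m, new (Suc m)}"
    by blast
  then have "{old m, old (Suc m)} \<in> snd old_shape"
    "\<not> (old m \<in> stretched \<and> old (Suc m) = old m + d) \<and> \<not> (old (Suc m) \<in> stretched \<and> old m = old (Suc m) + d)"
    "e = {old m + disp (old m), old (Suc m) + disp (old (Suc m))}"
    using edge_kept_iff[of m] by (auto simp: snd_old_shape moved_below)
  then show "e \<in> {{x + disp x, y + disp y} | x y. {x, y} \<in> snd old_shape \<and>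
      \<not> (x \<in> stretched \<and> y = x + d) \<and> \<not> (y \<in> stretched \<and> x = y + d)}"
    by blast
qed

lemma spawn_edges:
  "{{v + disp v, v + disp v + d} | v. v \<in> old ` op_indices}
   = (\<lambda>m. {new m, new (Suc m)}) ` (\<lambda>i. i + offset i) ` op_indices"
proof -
  have "{{v + disp v, v + disp v + d} | v. v \<in> old ` op_indices}
      = (\<lambda>v. {v + disp v, v + disp v + d}) ` old ` op_indices"
    by blast
  also have "\<dots> = (\<lambda>m. {new m, new (Suc m)}) ` (\<lambda>i. i + offset i) ` op_indices"
    unfolding image_image
  proof (intro image_cong refl)
    fix i assume i: "i \<in> op_indices"
    then have "old i + disp (old i) = new (i + offset i)"
      using op_indices_bounds by (simp add: old_moves)
    with old_spawns[OF i] show "{old i + disp (old i), old i + disp (old i) + d} =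
        {new (i + offset i), new (Suc (i + offset i))}"
      by simp
  qed
  finally show ?thesis .
qed

lemma split_edges:
  "{{v + disp v + d, v + d + disp (v + d)} | v. v \<in> stretched}
   = (\<lambda>m. {new m, new (Suc m)}) ` (\<lambda>i. Suc (i + offset i)) ` {length u..<length u + s}"
proof -
  have "{{v + disp v + d, v + d + disp (v + d)} | v. v \<in> stretched}
      = (\<lambda>v. {v + disp v + d, v + d + disp (v + d)}) ` stretched"
    by blast
  also have "\<dots> = (\<lambda>m. {new m, new (Suc m)}) ` (\<lambda>i. Suc (i + offset i)) ` {length u..<length u + s}"
    unfolding image_image
  proof (intro image_cong refl)
    fix i assume i: "i \<in> {length u..<length u + s}"
    then have "offset (Suc i) = Suc (offset i)"
      by (auto simp: lag_def)
    then have "old i + d + disp (old i + d) = new (Suc (Suc (i + offset i)))"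
      using i old_Suc[of i] old_moves[of "Suc i"] by simp
    moreover have "old i + disp (old i) + d = new (Suc (i + offset i))"
      using i by (simp add: old_spawns op_indices_def)
    ultimately show "{old i + disp (old i) + d, old i + d + disp (old i + d)} =
        {new (Suc (i + offset i)), new (Suc (Suc (i + offset i)))}"
      by simp
  qed
  finally show ?thesis .
qed

lemma new_edges:
  "snd new_shape =
     {{x + disp x, y + disp y} | x y. {x, y} \<in> snd old_shape \<and>
        \<not> (x \<in> stretched \<and> y = x + d) \<and> \<not> (y \<in> stretched \<and> x = y + d)}
     \<union> {{v + disp v, v + disp v + d} | v. v \<in> old ` op_indices}
     \<union> {{v + disp v + d, v + d + disp (v + d)} | v. v \<in> stretched}"
  unfolding surviving_edges spawn_edges split_edges snd_new_shape
  by (simp only: doubled_edge_indices[OF r_le_1] op_indices_def image_Un)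

theorem grow_step_double_block: "grow_step old_shape new_shape"
proof (rule grow_stepI)
  show "old 0 \<in> fst old_shape" "disp (old 0) = 0"
    by (auto simp: fst_old_shape disp_old lag_def)
  show "d \<in> cardinal_dirs"
    using d_dir dir_a dir_b by auto
  show "old ` op_indices \<subseteq> fst old_shape"
    unfolding fst_old_shape using op_indices_bounds by auto
  show "{v \<in> old ` op_indices. {v, v + d} \<in> snd old_shape} = stretched"
    by (rule stretched_ops)
  show "traj (v + d) (disp v) t \<noteq> traj y (disp y) t"
    if "v \<in> old ` op_indices - stretched" "y \<in> fst old_shape" "0 \<le> t" for v y and t :: real
    using that spawn_trajectory_disjoint by (auto simp: spawning_ops fst_old_shape split: if_splits)
  show "traj (v + d) (disp v) t \<noteq> traj (w + d) (disp w) t"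
    if "v \<in> old ` op_indices - stretched" "w \<in> old ` op_indices - stretched" "v \<noteq> w" for v w and t :: real
    using that by (auto simp: spawning_ops split: if_splits)
  show "traj x (disp x) t \<noteq> traj y (disp y) t"
    if "x \<in> fst old_shape" "y \<in> fst old_shape" "x \<noteq> y" "0 \<le> t" for x y and t :: real
    using that old_trajectories_disjoint unfolding fst_old_shape by blast
qed (simp_all add: disp_stretch inj_on_moves inj_on_spawns moves_spawns_disjoint new_vertices new_edges)

end

context staircase_dirs
begin

lemma grow_step_extend_block:
  assumes u: "set u \<subseteq> {a, b}" and e: "e \<in> {a, b}" and L: "s < L" "L \<le> 2 * s + 1"
  shows "grow_step (path_shape (u @ replicate s e)) (path_shape (u @ replicate L e))"
proof (cases "L = 2 * s + 1")
  case True
  interpret block_doubling a b u e s 1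
    using u e by unfold_locales auto
  show ?thesis
    using grow_step_double_block True by simp
next
  case False
  define u' where "u' = u @ replicate (2 * s - L) e"
  interpret block_doubling a b u' e "L - s" 0
    using u e by unfold_locales (auto simp: u'_def)
  have "u' @ replicate (L - s) e = u @ replicate s e" "u' @ replicate (2 * (L - s)) e = u @ replicate L e"
    using L False by (simp_all add: u'_def flip: replicate_add)
  then show ?thesis
    using grow_step_double_block by simp
qed

lemma grows_append_block:
  assumes "grows_ac_closed S0 (path_shape u) t" "set u \<subseteq> {a, b}" "e \<in> {a, b}"
  shows "grows_ac_closed S0 (path_shape (u @ replicate L e)) (t + floorlog 2 L)"
proof (induction L rule: less_induct)
  case (less L)
  show ?case
  proof (cases "L = 0")
    case True
    then show ?thesis
      using assms(1) by (simp add: floorlog_def)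
  next
    case False
    have "grows_ac_closed S0 (path_shape (u @ replicate (L div 2) e)) (t + floorlog 2 (L div 2))"
      using less.IH False by simp
    moreover have "AC (path_shape (u @ replicate (L div 2) e)) = path_shape (u @ replicate (L div 2) e)"
      using assms(2,3) by (intro AC_path_shape) auto
    moreover have "grow_step (path_shape (u @ replicate (L div 2) e)) (path_shape (u @ replicate L e))"
      using assms(2,3) False by (intro grow_step_extend_block) auto
    moreover have "floorlog 2 L = Suc (floorlog 2 (L div 2))"
      using False by (subst compute_floorlog) simp
    ultimately show ?thesis
      by (simp add: grows_ac_closed_Suc)
  qed
qed

lemma grows_ac_closed_path_shape:
  assumes "set w \<subseteq> {a, b}" "length w \<le> N"
  shows "\<exists>t. grows_ac_closed single_node (path_shape w) t \<and> t \<le> count_runs w * floorlog 2 N"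
  using assms
proof (induction "length w" arbitrary: w rule: less_induct)
  case less
  show ?case
  proof (cases "w = []")
    case True
    then show ?thesis
      by (intro exI[of _ 0]) (simp add: path_shape_Nil grows_ac_closed_0)
  next
    case False
    then obtain u L where uL: "w = u @ replicate L (last w)" "0 < L" "u = [] \<or> last u \<noteq> last w"
      using split_last_run by blast
    have e: "last w \<in> {a, b}"
      using less.prems(1) last_in_set[OF False] by blast
    have u: "set u \<subseteq> {a, b}"
      using less.prems(1) uL(1) by (metis le_sup_iff set_append)
    have "length w = length u + L"
      using uL(1) by (metis length_append length_replicate)
    then have lengths: "length u < length w" "floorlog 2 L \<le> floorlog 2 N"
      using uL(2) less.prems(2) by (simp_all add: floorlog_mono)
    obtain t where t: "grows_ac_closed single_node (path_shape u) t"
      "t \<le> count_runs u * floorlog 2 N"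
      using less.hyps[OF lengths(1) u] less.prems(2) lengths(1) by auto
    have "Suc (count_runs u) \<le> count_runs w"
      by (metis count_runs_append_replicate uL)
    then have "Suc (count_runs u) * floorlog 2 N \<le> count_runs w * floorlog 2 N"
      by (rule mult_le_mono1)
    then have "t + floorlog 2 L \<le> count_runs w * floorlog 2 N"
      using t(2) lengths(2) by simp
    moreover have "grows_ac_closed single_node (path_shape w) (t + floorlog 2 L)"
      using grows_append_block[OF t(1) u e, of L] by (simp only: uL(1)[symmetric])
    ultimately show ?thesis
      by blast
  qed
qed

lemma inner_pt_distinct_dirs: "x \<in> {a, b} \<Longrightarrow> y \<in> {a, b} \<Longrightarrow> x \<noteq> y \<Longrightarrow> inner_pt x y = 0"
  using perp inner_pt_commute[of a b] by auto

lemma count_runs_path_steps: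
  assumes steps: "set (path_steps ps) \<subseteq> {a, b}"
  shows "count_runs (path_steps ps) \<le> card (turning_points ps)"
proof -
  let ?w = "path_steps ps"
  let ?R = "{i. i < length ?w \<and> (i = 0 \<or> ?w ! (i - 1) \<noteq> ?w ! i)}"
  have "i \<in> turning_points ps" if i: "i \<in> ?R" for i
  proof (cases "i = 0")
    case True
    then show ?thesis
      using i by (auto simp: turning_points_def)
  next
    case False
    then have bounds: "0 < i" "Suc i < length ps"
      using i by auto
    have "i - 1 < length ?w" "i < length ?w"
      using bounds by simp_all
    then have "?w ! (i - 1) \<in> {a, b}" "?w ! i \<in> {a, b}"
      using steps nth_mem by blast+
    then have "inner_pt (?w ! (i - 1)) (?w ! i) = 0"
      using i False by (intro inner_pt_distinct_dirs) auto
    moreover have "ps ! (i - 1) - ps ! i = - ?w ! (i - 1)" "ps ! Suc i - ps ! i = ?w ! i"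
      using bounds nth_path_steps[of "i - 1" ps] nth_path_steps[of i ps] by simp_all
    ultimately have "inner_pt (ps ! (i - 1) - ps ! i) (ps ! Suc i - ps ! i) = 0"
      by (simp add: inner_pt_def)
    then show ?thesis
      using bounds by (simp add: turning_points_def)
  qed
  then have "?R \<subseteq> turning_points ps"
    by blast
  moreover have "finite (turning_points ps)"
    by (simp add: turning_points_def)
  ultimately show ?thesis
    unfolding count_runs_def by (rule card_mono[rotated])
qed

lemma staircase_path_grows:
  assumes pl: "path_listing S ps" and steps: "set (path_steps ps) \<subseteq> {a, b}"
  shows "\<exists>t. grows_conn single_node S t \<and> grows_adj single_node S t \<and>
    t \<le> card (turning_points ps) * floorlog 2 (card (fst S))"
proof -
  have "length (path_steps ps) \<le> card (fst S)"
    using pl by (simp add: path_listing_def distinct_card)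
  then obtain t where t: "grows_ac_closed single_node (path_shape (path_steps ps)) t"
    "t \<le> count_runs (path_steps ps) * floorlog 2 (card (fst S))"
    using grows_ac_closed_path_shape[OF steps] by blast
  moreover have "count_runs (path_steps ps) \<le> card (turning_points ps)"
    using count_runs_path_steps[OF steps] .
  ultimately show ?thesis
    using grows_ac_closed_imp_grows[OF t(1) translate_eq_path_steps[OF pl]]
    by (meson le_trans mult_le_mono1)
qed

end

lemma floorlog_2_le_log: "real (floorlog 2 n) \<le> 1 + log 2 n"
  by (cases "n = 0") (simp_all add: floorlog_def log_def)

theorem corollary5p1:
  fixes c :: nat
  shows "\<exists>C::real. \<forall>(S::shape) (ps::pt list).
           staircase S ps \<and> card (turning_points ps) \<le> c \<longrightarrow>
             (\<exists>t. grows_conn single_node S t \<and> real t \<le> C * (1 + log 2 (real (card (fst S))))) \<and>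
             (\<exists>t. grows_adj single_node S t \<and> real t \<le> C * (1 + log 2 (real (card (fst S)))))"
proof (intro exI[of _ "real c"] allI impI)
  fix S :: shape and ps :: "pt list"
  assume H: "staircase S ps \<and> card (turning_points ps) \<le> c"
  then obtain a b where ab: "a \<in> cardinal_dirs" "b \<in> cardinal_dirs" "inner_pt a b = 0"
    and pl: "path_listing S ps" and dirs: "\<forall>i. Suc i < length ps \<longrightarrow> ps ! Suc i - ps ! i \<in> {a, b}"
    unfolding staircase_def by blast
  have "staircase_dirs a b"
    using ab by unfold_locales
  moreover have "set (path_steps ps) \<subseteq> {a, b}"
    unfolding set_path_steps using dirs by blast
  ultimately obtain t where t: "grows_conn single_node S t" "grows_adj single_node S t"
    and t_le: "t \<le> card (turning_points ps) * floorlog 2 (card (fst S))"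
    using staircase_dirs.staircase_path_grows[OF _ pl] by blast
  have "real t \<le> real c * real (floorlog 2 (card (fst S)))"
    using t_le H by (metis le_trans mult_le_mono1 of_nat_le_iff of_nat_mult)
  also have "\<dots> \<le> real c * (1 + log 2 (real (card (fst S))))"
    by (intro mult_left_mono floorlog_2_le_log) simp
  finally show "(\<exists>t. grows_conn single_node S t \<and> real t \<le> real c * (1 + log 2 (real (card (fst S))))) \<and>
      (\<exists>t. grows_adj single_node S t \<and> real t \<le> real c * (1 + log 2 (real (card (fst S)))))"
    using t by blast
qed

end
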